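(* Let $\kappa$ be an infinite cardinal and $\mathbb{A}$ a countable Boolean algebra. Let $\varphi,\psi\colon\mathbb{A}\to\mathbb{M}_\kappa$ be homomorphisms such that $\bigvee\{\varphi(A)\triangle\psi(A)\colon A\in\mathbb{A}\}=1$. Then for each $\varepsilon>0$ there is $C\in\mathbb{A}$ such that $\lambda_\kappa(\varphi(C)\triangle\psi(C))>1/4-\varepsilon$.
   Context: $\mathbb{M}_\kappa=Bor(2^\kappa)/\mathcal{N}_\kappa$ is the measure algebra of the standard product measure $\lambda_\kappa$ on $2^\kappa$ ($\mathcal{N}_\kappa$ the null sets); $\lambda_\kappa$ also denotes the induced measure on $\mathbb{M}_\kappa$, which is a complete Boolean algebra. *)

theory Defs
  imports "HOL-Probability.Probability"
begin

text \<open>The standard product measure lambda_kappa on 2^kappa, where kappa is the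
  cardinality of the (infinite) index type 'k: the product of kappa copies of the
  fair coin measure on bool.\<close>
definition lambda_k :: "('k \<Rightarrow> bool) measure" where
  "lambda_k = PiM UNIV (\<lambda>_::'k. measure_pmf (bernoulli_pmf (1/2)))"

text \<open>Elements of the measure algebra M_kappa are represented by measurable sets,
  two sets denoting the same element iff their symmetric difference is null.\<close>
definition symd :: "'a set \<Rightarrow> 'a set \<Rightarrow> 'a set" where
  "symd X Y = (X - Y) \<union> (Y - X)"

definition ae_eq :: "('k \<Rightarrow> bool) set \<Rightarrow> ('k \<Rightarrow> bool) set \<Rightarrow> bool" where
  "ae_eq X Y \<longleftrightarrow> emeasure lambda_k (symd X Y) = 0"

definition ae_le :: "('k \<Rightarrow> bool) set \<Rightarrow> ('k \<Rightarrow> bool) set \<Rightarrow> bool" where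
  "ae_le X Y \<longleftrightarrow> emeasure lambda_k (X - Y) = 0"

definition malg_hom :: "('a::boolean_algebra \<Rightarrow> ('k \<Rightarrow> bool) set) \<Rightarrow> bool" where
  "malg_hom f \<longleftrightarrow>
     (\<forall>a. f a \<in> sets lambda_k) \<and>
     ae_eq (f bot) {} \<and> ae_eq (f top) (space lambda_k) \<and>
     (\<forall>a b. ae_eq (f (inf a b)) (f a \<inter> f b)) \<and>
     (\<forall>a b. ae_eq (f (sup a b)) (f a \<union> f b)) \<and>
     (\<forall>a. ae_eq (f (- a)) (space lambda_k - f a))"

definition malg_is_Sup :: "('k \<Rightarrow> bool) set set \<Rightarrow> ('k \<Rightarrow> bool) set \<Rightarrow> bool" where
  "malg_is_Sup S U \<longleftrightarrow> U \<in> sets lambda_k \<and> (\<forall>X\<in>S. ae_le X U) \<and>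
     (\<forall>V\<in>sets lambda_k. (\<forall>X\<in>S. ae_le X V) \<longrightarrow> ae_le U V)"

end

theory Submission
  imports Defs
begin

text \<open>Put \<open>D C = \<phi> C \<triangle> \<psi> C\<close>. As \<phi> and \<psi> are homomorphisms, \<open>D\<close> turns symmetric differences
  in \<open>\<bbbA>\<close> into symmetric differences in \<open>\<bbbM>\<^sub>\<kappa>\<close>. For \<open>A\<^sub>1, \<dots>, A\<^sub>n\<close>, pairing each \<open>C\<close> with
  \<open>C \<triangle> A\<^sub>n\<close> shows inductively that a point of \<open>D A\<^sub>1 \<union> \<dots> \<union> D A\<^sub>n\<close> lies in \<open>D C\<close> for exactly
  half of the \<open>2\<^sup>n\<close> symmetric differences \<open>C\<close> of subfamilies of the \<open>A\<^sub>i\<close>, so the average of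
  \<open>\<lambda>(D C)\<close> over them is \<open>\<lambda>(D A\<^sub>1 \<union> \<dots> \<union> D A\<^sub>n) / 2\<close>. Since \<open>\<bbbA>\<close> is countable and the \<open>D A\<close>
  have supremum 1, these finite unions have measure arbitrarily close to 1. This even gives
  some \<open>C\<close> with \<open>\<lambda>(D C) > 1/2 - \<epsilon>\<close>; only the fact that \<open>\<lambda>\<^sub>\<kappa>\<close> is a probability measure is used.\<close>

definition symm_diff :: "'a::boolean_algebra \<Rightarrow> 'a \<Rightarrow> 'a" where
  "symm_diff a b = sup (inf a (- b)) (inf (- a) b)"

fun xor_span :: "'a::boolean_algebra list \<Rightarrow> 'a list" where
  "xor_span [] = [bot]"
| "xor_span (a # as) = xor_span as @ map (\<lambda>c. symm_diff c a) (xor_span as)"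

lemma length_xor_span: "length (xor_span as) = 2 ^ length as"
  by (induction as) auto

lemma xor_span_not_Nil: "xor_span as \<noteq> []"
  using length_xor_span[of as] by (metis list.size(3) power_not_zero zero_neq_numeral)

lemma ex_ge_average:
  fixes f :: "'c \<Rightarrow> real"
  assumes "xs \<noteq> []"
  shows "\<exists>x\<in>set xs. (\<Sum>y\<leftarrow>xs. f y) \<le> real (length xs) * f x"
proof (rule ccontr)
  assume "\<not> ?thesis"
  then have "(\<Sum>y\<leftarrow>xs. f y) < (\<Sum>y\<leftarrow>xs. (\<Sum>z\<leftarrow>xs. f z) / real (length xs))"
    using assms by (intro sum_list_strict_mono) (auto simp: field_simps)
  then show False
    using assms by (simp add: sum_list_triv)
qed

lemma (in finite_measure) measure_Int_add_measure_symd_Int: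
  assumes "X \<in> sets M" "Y \<in> sets M" "W \<in> sets M"
  shows "measure M (X \<inter> W) + measure M (symd X Y \<inter> W)
    = 2 * measure M (X \<inter> (W - Y)) + measure M (Y \<inter> W)"
proof -
  have "measure M (X \<inter> W) = measure M (X \<inter> (W - Y)) + measure M (Y \<inter> W \<inter> X)"
    using assms
    by (subst finite_measure_Union[symmetric]) (auto intro: arg_cong[where f = "measure M"])
  moreover have "measure M (symd X Y \<inter> W) = measure M (X \<inter> (W - Y)) + measure M (Y \<inter> W - X)"
    using assms
    by (subst finite_measure_Union[symmetric]) (auto simp: symd_def intro: arg_cong[where f = "measure M"])
  moreover have "measure M (Y \<inter> W) = measure M (Y \<inter> W \<inter> X) + measure M (Y \<inter> W - X)"
    using assms
    by (subst finite_measure_Union[symmetric]) (auto intro: arg_cong[where f = "measure M"])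
  ultimately show ?thesis
    by simp
qed

lemma (in finite_measure) measure_sum_xor_span:
  fixes D :: "'c::boolean_algebra \<Rightarrow> 'a set"
  assumes sets_D: "\<And>c. D c \<in> sets M"
    and AE_bot: "AE x in M. x \<notin> D bot"
    and AE_symm_diff: "\<And>c a. AE x in M. x \<in> D (symm_diff c a) \<longleftrightarrow> x \<in> symd (D c) (D a)"
    and "W \<in> sets M"
  shows "2 * (\<Sum>c\<leftarrow>xor_span as. measure M (D c \<inter> W))
    = 2 ^ length as * measure M ((\<Union>a\<in>set as. D a) \<inter> W)"
  using \<open>W \<in> sets M\<close>
proof (induction as arbitrary: W)
  case Nil
  have "measure M (D bot \<inter> W) = measure M {}"
    using AE_bot sets_D Nil by (intro measure_eq_AE) auto
  then show ?case
    by simp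
next
  case (Cons a as)
  let ?U = "\<Union>a\<in>set as. D a"
  have "?U \<in> sets M"
    using sets_D by auto
  have pair: "measure M (D c \<inter> W) + measure M (D (symm_diff c a) \<inter> W)
      = 2 * measure M (D c \<inter> (W - D a)) + measure M (D a \<inter> W)" for c
  proof -
    have "measure M (D (symm_diff c a) \<inter> W) = measure M (symd (D c) (D a) \<inter> W)"
      using AE_symm_diff[of c a] sets_D Cons.prems
      by (intro measure_eq_AE) (auto simp: symd_def elim!: AE_mp)
    then show ?thesis
      using measure_Int_add_measure_symd_Int[OF sets_D sets_D Cons.prems] by simp
  qed
  have "2 * (\<Sum>c\<leftarrow>xor_span (a # as). measure M (D c \<inter> W))
      = 2 * (\<Sum>c\<leftarrow>xor_span as. measure M (D c \<inter> W) + measure M (D (symm_diff c a) \<inter> W))"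
    by (simp add: sum_list_addf o_def)
  also have "\<dots> = 2 * (2 * (\<Sum>c\<leftarrow>xor_span as. measure M (D c \<inter> (W - D a))))
      + 2 ^ Suc (length as) * measure M (D a \<inter> W)"
    by (simp add: pair sum_list_addf sum_list_const_mult sum_list_triv length_xor_span algebra_simps)
  also have "\<dots> = 2 ^ Suc (length as) * (measure M (?U \<inter> (W - D a)) + measure M (D a \<inter> W))"
    using Cons.IH[of "W - D a"] Cons.prems sets_D by (simp add: algebra_simps)
  also have "measure M (?U \<inter> (W - D a)) + measure M (D a \<inter> W)
      = measure M ((\<Union>a\<in>set (a # as). D a) \<inter> W)"
    using sets_D Cons.prems \<open>?U \<in> sets M\<close>
    by (subst finite_measure_Union[symmetric]) (auto intro: arg_cong[where f = "measure M"])
  finally show ?case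
    by simp
qed

lemma prob_space_lambda_k: "prob_space lambda_k"
  unfolding lambda_k_def by (intro prob_space_PiM prob_space_measure_pmf)

lemma AE_iff_if_ae_eq:
  assumes "X \<in> sets lambda_k" "Y \<in> sets lambda_k" "ae_eq X Y"
  shows "AE x in lambda_k. x \<in> X \<longleftrightarrow> x \<in> Y"
proof -
  have "symd X Y \<in> null_sets lambda_k"
    using assms by (intro null_setsI) (auto simp: ae_eq_def symd_def)
  then show ?thesis
    by (rule AE_I') (auto simp: symd_def)
qed

lemma sets_malg_hom: "malg_hom f \<Longrightarrow> f a \<in> sets lambda_k"
  by (simp add: malg_hom_def)

lemma AE_malg_hom_bot:
  assumes "malg_hom f"
  shows "AE x in lambda_k. x \<notin> f bot"
  using AE_iff_if_ae_eq[of "f bot" "{}"] assms by (auto simp: malg_hom_def)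

lemma AE_malg_hom_symm_diff:
  assumes "malg_hom f"
  shows "AE x in lambda_k. x \<in> f (symm_diff a b) \<longleftrightarrow> x \<in> symd (f a) (f b)"
proof -
  have inf: "AE x in lambda_k. x \<in> f (inf a b) \<longleftrightarrow> x \<in> f a \<inter> f b" for a b
    using assms by (intro AE_iff_if_ae_eq) (auto simp: malg_hom_def)
  have sup: "AE x in lambda_k. x \<in> f (sup a b) \<longleftrightarrow> x \<in> f a \<union> f b" for a b
    using assms by (intro AE_iff_if_ae_eq) (auto simp: malg_hom_def)
  have compl: "AE x in lambda_k. x \<in> f (- a) \<longleftrightarrow> x \<in> space lambda_k - f a" for a
    using assms by (intro AE_iff_if_ae_eq) (auto simp: malg_hom_def)
  show ?thesis
    using sup[of "inf a (- b)" "inf (- a) b"] inf[of a "- b"] inf[of "- a" b] compl[of a] compl[of b]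
      AE_space[of lambda_k]
    unfolding symm_diff_def symd_def by eventually_elim auto
qed

lemma measure_symd_malg_hom_sum_xor_span:
  assumes "malg_hom \<phi>" "malg_hom \<psi>"
  shows "2 * (\<Sum>c\<leftarrow>xor_span as. measure lambda_k (symd (\<phi> c) (\<psi> c)))
    = 2 ^ length as * measure lambda_k (\<Union>a\<in>set as. symd (\<phi> a) (\<psi> a))"
proof -
  interpret prob_space lambda_k
    by (rule prob_space_lambda_k)
  let ?D = "\<lambda>c. symd (\<phi> c) (\<psi> c)"
  have sets_D: "?D c \<in> sets lambda_k" for c
    using sets_malg_hom[OF assms(1)] sets_malg_hom[OF assms(2)] by (auto simp: symd_def)
  have "AE x in lambda_k. x \<notin> ?D bot"
    using AE_malg_hom_bot[OF assms(1)] AE_malg_hom_bot[OF assms(2)]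
    by eventually_elim (auto simp: symd_def)
  moreover have "AE x in lambda_k. x \<in> ?D (symm_diff c a) \<longleftrightarrow> x \<in> symd (?D c) (?D a)" for c a
    using AE_malg_hom_symm_diff[OF assms(1), of c a] AE_malg_hom_symm_diff[OF assms(2), of c a]
    by eventually_elim (auto simp: symd_def)
  ultimately show ?thesis
    using measure_sum_xor_span[of ?D, OF sets_D _ _ sets.top, of as] sets_D
    by (simp add: Int_absorb2 sets.sets_into_space sets.finite_UN)
qed

lemma measure_UN_eq_1_if_malg_is_Sup:
  fixes D :: "'c::countable \<Rightarrow> ('k \<Rightarrow> bool) set"
  assumes sets_D: "\<And>c. D c \<in> sets lambda_k"
    and "malg_is_Sup (range D) (space lambda_k)"
  shows "measure lambda_k (\<Union>c. D c) = 1"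
proof -
  interpret prob_space lambda_k
    by (rule prob_space_lambda_k)
  have "(\<Union>c. D c) \<in> sets lambda_k"
    using sets_D by auto
  moreover have "\<forall>X\<in>range D. ae_le X (\<Union>c. D c)"
    unfolding ae_le_def by (metis Diff_eq_empty_iff UN_upper UNIV_I emeasure_empty imageE)
  ultimately have "emeasure lambda_k (space lambda_k - (\<Union>c. D c)) = 0"
    using assms(2) by (auto simp: malg_is_Sup_def ae_le_def)
  then show ?thesis
    using prob_compl[OF \<open>(\<Union>c. D c) \<in> sets lambda_k\<close>] by (simp add: measure_def)
qed

lemma (in finite_measure) ex_list_measure_UN_gt:
  fixes D :: "'c::countable \<Rightarrow> 'a set"
  assumes "\<And>c. D c \<in> sets M" "r < measure M (\<Union>c. D c)"
  shows "\<exists>as. r < measure M (\<Union>a\<in>set as. D a)"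
proof -
  define U where "U n = (\<Union>a\<in>set (map from_nat [0..<n]). D a)" for n
  have "range U \<subseteq> sets M"
    using assms(1) by (auto simp: U_def)
  moreover have "incseq U"
    unfolding U_def incseq_def by (fastforce intro: order.strict_trans2)
  moreover have "D c \<subseteq> U (Suc (to_nat c))" for c
    unfolding U_def by (auto intro!: bexI[of _ "to_nat c"])
  then have "(\<Union>n. U n) = (\<Union>c. D c)"
    by (fastforce simp: U_def)
  ultimately have "(\<lambda>n. measure M (U n)) \<longlonglongrightarrow> measure M (\<Union>c. D c)"
    using finite_Lim_measure_incseq[of U] by simp
  then have "\<forall>\<^sub>F n in sequentially. r < measure M (U n)"
    using assms(2) by (rule order_tendstoD)
  then show ?thesis
    unfolding U_def by (meson eventually_sequentially order_refl)
qed

lemma ex_symd_malg_hom_measure_gt: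
  fixes \<phi> \<psi> :: "'a::{boolean_algebra,countable} \<Rightarrow> ('k \<Rightarrow> bool) set"
  assumes hom: "malg_hom \<phi>" "malg_hom \<psi>"
    and "malg_is_Sup (range (\<lambda>A. symd (\<phi> A) (\<psi> A))) (space lambda_k)"
    and "r < 1/2"
  shows "\<exists>C. r < measure lambda_k (symd (\<phi> C) (\<psi> C))"
proof -
  interpret prob_space lambda_k
    by (rule prob_space_lambda_k)
  let ?D = "\<lambda>c. symd (\<phi> c) (\<psi> c)"
  have sets_D: "?D c \<in> sets lambda_k" for c
    using sets_malg_hom[OF hom(1)] sets_malg_hom[OF hom(2)] by (auto simp: symd_def)
  have "2 * r < measure lambda_k (\<Union>c. ?D c)"
    using measure_UN_eq_1_if_malg_is_Sup[of ?D, OF sets_D assms(3)] assms(4) by simp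
  then obtain as where as: "2 * r < measure lambda_k (\<Union>a\<in>set as. ?D a)"
    using ex_list_measure_UN_gt[of ?D, OF sets_D] by blast
  obtain C where "(\<Sum>c\<leftarrow>xor_span as. measure lambda_k (?D c))
      \<le> real (length (xor_span as)) * measure lambda_k (?D C)"
    using ex_ge_average[OF xor_span_not_Nil] by blast
  then have "2 ^ length as * measure lambda_k (\<Union>a\<in>set as. ?D a)
      \<le> 2 ^ length as * (2 * measure lambda_k (?D C))"
    unfolding length_xor_span measure_symd_malg_hom_sum_xor_span[OF hom, symmetric] by simp
  then show ?thesis
    using as by (intro exI[of _ C]) simp
qed

theorem proposition7p9:
  fixes \<phi> \<psi> :: "'a::{boolean_algebra,countable} \<Rightarrow> ('k \<Rightarrow> bool) set"
  assumes "infinite (UNIV :: 'k set)"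
    and "malg_hom \<phi>" and "malg_hom \<psi>"
    and "malg_is_Sup (range (\<lambda>A. symd (\<phi> A) (\<psi> A))) (space lambda_k)"
    and "(\<epsilon>::real) > 0"
  shows "\<exists>C. measure lambda_k (symd (\<phi> C) (\<psi> C)) > 1/4 - \<epsilon>"
  using ex_symd_malg_hom_measure_gt[OF assms(2-4)] assms(5) by simp

end
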